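(* Under the hypotheses and notation of the tortuosity integral representation (let $\Theta_1,G,F,\eta,\rho_f,\phi,\nu,K,K_0,\alpha_\infty,T,a,\sigma$ be as there), let $d\lambda(\Theta):=\Theta\,dG(\Theta)$ on $[0,\Theta_1]$ and define the moments $\mu_k(d\lambda):=\int_0^{\Theta_1}\Theta^k\,d\lambda(\Theta)$, $\mu_k(d\sigma):=\int_0^{\Theta_1}t^k\,d\sigma(t)$ for $k\ge0$. Then (i) $\mu_0(d\lambda)=\frac{FK_0}{\nu}=\frac{\alpha_\infty K_0}{\phi\nu}$; (ii) for every $p\ge1$, $\mu_p(d\lambda)=\frac{\mu_0(d\lambda)}{\alpha_\infty}\sum_{k+j=p-1}\mu_k(d\sigma)\,\mu_j(d\lambda)$ (sum over $k,j\ge0$); (iii) in particular $\mu_0(d\sigma)=\frac{\alpha_\infty\,\mu_1(d\lambda)}{\mu_0(d\lambda)^2}=\frac{\nu^2\phi}{K_0^2F}\mu_1(d\lambda)$, equivalently $\alpha_\infty=\frac{\mu_0(d\sigma)\,\mu_0(d\lambda)^2}{\mu_1(d\lambda)}$.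
   Context: Standing hypotheses: $\Theta_1>0$; $G$ nondecreasing, right-continuous, $G=0$ on $(-\infty,0]$, $G=1$ on $[\Theta_1,\infty)$; $(F/\nu)K(\omega)=\int_0^{\Theta_1}\Theta\,dG(\Theta)/(1-i\omega\Theta)$; $K_0=K(0)$; $\alpha_\infty=\phi F$; $T(\omega)=\frac{i\eta\phi}{\omega\rho_f}K(\omega)^{-1}$; $a\ge0$ and the positive measure $\sigma$ on $[0,\Theta_1]$ are those for which $T(\omega)=a\,i/\omega+\int_0^{\Theta_1}d\sigma(t)/(1-i\omega t)$. *)

theory Defs
  imports "HOL-Analysis.Analysis"
begin

text \<open>Moments of d lambda(Theta) = Theta dG(Theta) on [0,Theta1], where dG is the
  Lebesgue--Stieltjes measure of G.\<close>
definition lam_moment :: "(real \<Rightarrow> real) \<Rightarrow> real \<Rightarrow> nat \<Rightarrow> real" where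
  "lam_moment G \<Theta>1 k = (LINT \<Theta>:{0..\<Theta>1}|interval_measure G. \<Theta> ^ k * \<Theta>)"

definition sig_moment :: "real measure \<Rightarrow> real \<Rightarrow> nat \<Rightarrow> real" where
  "sig_moment \<sigma> \<Theta>1 k = (LINT t:{0..\<Theta>1}|\<sigma>. t ^ k)"

end

theory Submission
  imports Defs
begin

text \<open>Put \<open>L(\<omega>) = \<integral> \<Theta> dG(\<Theta>) / (1 - i\<omega>\<Theta>)\<close> and \<open>S(\<omega>) = \<integral> d\<sigma>(t) / (1 - i\<omega>t)\<close>. Since
  \<open>K = (\<nu>/F) L\<close>, the representation of \<open>T\<close> becomes \<open>(a - i\<omega> S(\<omega>)) L(\<omega>) = \<phi>F\<close> for small
  \<open>\<omega> \<noteq> 0\<close>. Both transforms expand in powers of \<open>i\<omega>\<close> with the moments of \<open>d\<lambda>\<close> and \<open>d\<sigma>\<close> as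
  coefficients and bounded remainders, so the coefficients of the product can be compared:
  \<open>a \<mu>\<^sub>0(d\<lambda>) = \<phi>F\<close> and \<open>a \<mu>\<^sub>p(d\<lambda>)\<close> is the Cauchy product coefficient
  \<open>\<Sum> \<mu>\<^sub>k(d\<sigma>) \<mu>\<^sub>j(d\<lambda>)\<close> over \<open>k + j = p - 1\<close>. Eliminating \<open>a\<close> gives the recursion, and
  \<open>\<omega> = 0\<close> in the representation of \<open>K\<close> gives \<open>\<mu>\<^sub>0(d\<lambda>) = F K\<^sub>0 / \<nu>\<close>.\<close>

lemma Bfun_add:
  fixes f g :: "'a \<Rightarrow> 'b::real_normed_vector"
  assumes "Bfun f F" "Bfun g F"
  shows "Bfun (\<lambda>x. f x + g x) F"
proof -
  obtain A B where "\<forall>\<^sub>F x in F. norm (f x) \<le> A" "\<forall>\<^sub>F x in F. norm (g x) \<le> B"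
    using assms unfolding Bfun_def by blast
  then have "\<forall>\<^sub>F x in F. norm (f x + g x) \<le> A + B"
    by eventually_elim (meson add_mono norm_triangle_le)
  then show ?thesis by (rule BfunI)
qed

lemma Bfun_diff:
  fixes f g :: "'a \<Rightarrow> 'b::real_normed_vector"
  assumes "Bfun f F" "Bfun g F"
  shows "Bfun (\<lambda>x. f x - g x) F"
proof -
  obtain A B where "\<forall>\<^sub>F x in F. norm (f x) \<le> A" "\<forall>\<^sub>F x in F. norm (g x) \<le> B"
    using assms unfolding Bfun_def by blast
  then have "\<forall>\<^sub>F x in F. norm (f x - g x) \<le> A + B"
    by eventually_elim (meson add_mono norm_triangle_ineq4 order.trans)
  then show ?thesis by (rule BfunI)
qed

lemma Bfun_mult:
  fixes f g :: "'a \<Rightarrow> 'b::real_normed_algebra"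
  assumes "Bfun f F" "Bfun g F"
  shows "Bfun (\<lambda>x. f x * g x) F"
proof -
  obtain A B where "\<forall>\<^sub>F x in F. norm (f x) \<le> A" "\<forall>\<^sub>F x in F. norm (g x) \<le> B"
    using assms unfolding Bfun_def by blast
  then have "\<forall>\<^sub>F x in F. norm (f x * g x) \<le> A * B"
    by eventually_elim (meson norm_ge_zero mult_mono order.trans norm_mult_ineq)
  then show ?thesis by (rule BfunI)
qed

lemma Bfun_sum:
  fixes f :: "'i \<Rightarrow> 'a \<Rightarrow> 'b::real_normed_vector"
  assumes "\<And>i. i \<in> I \<Longrightarrow> Bfun (f i) F"
  shows "Bfun (\<lambda>x. \<Sum>i\<in>I. f i x) F"
  using assms by (induction I rule: infinite_finite_induct) (simp_all add: Bfun_add)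

lemma tendsto_of_expansion:
  fixes X Y :: "real \<Rightarrow> complex"
  assumes "\<forall>\<^sub>F w in at 0. X w = c + \<i> * of_real w * Y w" and "Bfun Y (at 0)"
  shows "(X \<longlongrightarrow> c) (at 0)"
proof -
  have "((\<lambda>w. \<i> * of_real w) \<longlongrightarrow> 0) (at (0::real))"
    by (auto intro!: tendsto_eq_intros)
  then have "Zfun (\<lambda>w. \<i> * of_real w * Y w) (at 0)"
    using bounded_bilinear.Zfun_prod_Bfun[OF bounded_bilinear_mult _ assms(2)]
    by (simp add: tendsto_Zfun_iff)
  then have "((\<lambda>w. c + \<i> * of_real w * Y w) \<longlongrightarrow> c) (at 0)"
    using tendsto_add[OF tendsto_const, of _ 0 _ c] by (simp add: tendsto_Zfun_iff)
  then show ?thesis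
    using assms(1) by (simp add: tendsto_cong)
qed

text \<open>The hypotheses say that \<open>X m\<close> is the \<open>m\<close>-th tail \<open>\<Sum>\<^sub>i c (m + i) (i w)\<^sup>i\<close> of a formal
  series in \<open>i w\<close>; no convergence is needed, only boundedness of the tails near \<open>0\<close>.\<close>

lemma expansion_coefficients_eq_0:
  fixes X :: "nat \<Rightarrow> real \<Rightarrow> complex"
  assumes expansion: "\<And>m w. X m w = c m + \<i> * of_real w * X (Suc m) w"
    and bounded: "\<And>m. Bfun (X (Suc m)) (at 0)"
    and vanishes: "\<forall>\<^sub>F w in at 0. X 0 w = 0"
  shows "c m = 0"
proof -
  have step: "c m = 0 \<and> (\<forall>\<^sub>F w in at 0. X (Suc m) w = 0)" if X_m: "\<forall>\<^sub>F w in at 0. X m w = 0" for m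
  proof
    have "(X m \<longlongrightarrow> c m) (at 0)"
      by (rule tendsto_of_expansion[OF always_eventually[OF allI[OF expansion]] bounded])
    moreover have "(X m \<longlongrightarrow> 0) (at 0)"
      using X_m by (rule tendsto_eventually)
    ultimately show c_m: "c m = 0"
      using tendsto_unique[OF at_neq_bot] by blast
    from X_m eventually_neq_at_within[of 0 0 UNIV] show "\<forall>\<^sub>F w in at 0. X (Suc m) w = 0"
    proof eventually_elim
      case (elim w)
      then show ?case
        using expansion[of m w] c_m by simp
    qed
  qed
  have "\<forall>\<^sub>F w in at 0. X m w = 0" for m
  proof (induction m)
    case 0
    show ?case by (rule vanishes)
  next
    case (Suc m)
    then show ?case using step by blast
  qed
  then show ?thesis
    using step by blast
qed

lemma cauchy_product_expansion:
  fixes P Q :: "nat \<Rightarrow> 'a::comm_ring"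
  assumes P: "\<And>k. P k = p k + z * P (Suc k)" and Q: "\<And>j. Q j = q j + z * Q (Suc j)"
  shows "(\<Sum>k<m. p k * Q (m - k)) + P m * Q 0 =
    (\<Sum>k\<le>m. p k * q (m - k)) + z * ((\<Sum>k<Suc m. p k * Q (Suc m - k)) + P (Suc m) * Q 0)"
proof -
  have "p k * Q (m - k) = p k * q (m - k) + z * (p k * Q (Suc m - k))" if "k < m" for k
    using Q[of "m - k"] that by (simp add: Suc_diff_le algebra_simps)
  then have "(\<Sum>k<m. p k * Q (m - k)) = (\<Sum>k<m. p k * q (m - k)) + z * (\<Sum>k<m. p k * Q (Suc m - k))"
    by (simp add: sum.distrib sum_distrib_left)
  moreover have "(\<Sum>k\<le>m. p k * q (m - k)) = (\<Sum>k<m. p k * q (m - k)) + p m * q 0"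
    by (simp flip: lessThan_Suc_atMost)
  ultimately show ?thesis
    using P[of m] Q[of 0] by (simp add: algebra_simps)
qed

lemma product_expansion_coefficients:
  fixes L S :: "nat \<Rightarrow> real \<Rightarrow> complex" and \<mu> s :: "nat \<Rightarrow> complex"
  assumes L: "\<And>j w. L j w = \<mu> j + \<i> * of_real w * L (Suc j) w"
    and S: "\<And>k w. S k w = s k + \<i> * of_real w * S (Suc k) w"
    and L_bounded: "\<And>j. Bfun (L j) (at 0)" and S_bounded: "\<And>k. Bfun (S k) (at 0)"
    and identity: "\<forall>\<^sub>F w in at 0. (a - \<i> * of_real w * S 0 w) * L 0 w = c"
  shows "a * \<mu> 0 = c" and "a * \<mu> (Suc m) = (\<Sum>k\<le>m. s k * \<mu> (m - k))"
proof -
  \<comment> \<open>\<open>X m\<close> is the \<open>m\<close>-th tail of the expansion of \<open>(a - i w S\<^sub>0 w) L\<^sub>0 w - c\<close>.\<close>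
  define X where "X m w = (case m of
      0 \<Rightarrow> (a - \<i> * of_real w * S 0 w) * L 0 w - c
    | Suc n \<Rightarrow> a * L (Suc n) w - ((\<Sum>k<n. s k * L (n - k) w) + S n w * L 0 w))" for m w
  define d where "d m = (case m of
      0 \<Rightarrow> a * \<mu> 0 - c
    | Suc n \<Rightarrow> a * \<mu> (Suc n) - (\<Sum>k\<le>n. s k * \<mu> (n - k)))" for m
  have "X m w = d m + \<i> * of_real w * X (Suc m) w" for m w
  proof (cases m)
    case 0
    then show ?thesis
      using L[of 0 w] by (simp add: X_def d_def algebra_simps)
  next
    case (Suc n)
    have "(\<Sum>k<n. s k * L (n - k) w) + S n w * L 0 w =
      (\<Sum>k\<le>n. s k * \<mu> (n - k)) + \<i> * of_real w * ((\<Sum>k<Suc n. s k * L (Suc n - k) w) + S (Suc n) w * L 0 w)"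
      using S L by (rule cauchy_product_expansion)
    with Suc show ?thesis
      using L[of "Suc n" w] by (simp add: X_def d_def algebra_simps)
  qed
  moreover have "Bfun (X (Suc m)) (at 0)" for m
    unfolding X_def nat.case
    by (intro Bfun_diff Bfun_add Bfun_sum Bfun_mult Bfun_const L_bounded S_bounded)
  moreover have "\<forall>\<^sub>F w in at 0. X 0 w = 0"
    using identity by (simp add: X_def)
  ultimately have "d m = 0" for m
    by (rule expansion_coefficients_eq_0)
  from this[of 0] this[of "Suc m"] show "a * \<mu> 0 = c" "a * \<mu> (Suc m) = (\<Sum>k\<le>m. s k * \<mu> (m - k))"
    by (simp_all add: d_def)
qed

definition moment_transform :: "real measure \<Rightarrow> real \<Rightarrow> nat \<Rightarrow> real \<Rightarrow> complex" where
  "moment_transform M T j w = (LINT t:{0..T}|M. of_real (t ^ j) / (1 - \<i> * of_real (w * t)))"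

lemma one_le_norm_one_minus_ii_mult: "1 \<le> cmod (1 - \<i> * of_real x)"
  using abs_Re_le_cmod[of "1 - \<i> * of_real x"] by simp

lemma set_integrable_bounded:
  fixes f :: "real \<Rightarrow> 'b::{banach, second_countable_topology}"
  assumes "sets M = sets borel" "emeasure M A < \<infinity>" "A \<in> sets borel"
    and "f \<in> borel_measurable borel" "\<And>x. x \<in> A \<Longrightarrow> norm (f x) \<le> B"
  shows "set_integrable M A f"
  unfolding set_integrable_def
proof (rule integrableI_bounded_set_indicator[where B=B])
  show "f \<in> borel_measurable M"
    using assms(4) by (subst measurable_cong_sets[OF assms(1) refl])
qed (use assms in auto)

lemma norm_transform_integrand_le: "cmod (of_real (t ^ j) / (1 - \<i> * of_real x)) \<le> \<bar>t\<bar> ^ j"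
proof -
  have "cmod (of_real (t ^ j) / (1 - \<i> * of_real x)) = \<bar>t\<bar> ^ j / cmod (1 - \<i> * of_real x)"
    by (simp add: norm_divide norm_power)
  also have "\<dots> \<le> \<bar>t\<bar> ^ j"
    using mult_left_mono[OF one_le_norm_one_minus_ii_mult[of x], of "\<bar>t\<bar> ^ j"]
    by (simp add: divide_le_eq)
  finally show ?thesis .
qed

locale finite_measure_on_Icc =
  fixes M :: "real measure" and T :: real
  assumes sets_eq_borel: "sets M = sets borel"
    and emeasure_Icc_finite: "emeasure M {0..T} < \<infinity>"
begin

lemma set_integrable_power:
  "set_integrable M {0..T} (\<lambda>t. of_real (t ^ j) :: 'a::{real_normed_field, banach, second_countable_topology})"
  by (rule set_integrable_bounded[OF sets_eq_borel emeasure_Icc_finite, where B="\<bar>T\<bar> ^ j"])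
    (auto simp: norm_power intro!: power_mono)

lemma set_integrable_transform_integrand:
  "set_integrable M {0..T} (\<lambda>t. of_real (t ^ j) / (1 - \<i> * of_real (w * t)))"
proof (rule set_integrable_bounded[OF sets_eq_borel emeasure_Icc_finite, where B="\<bar>T\<bar> ^ j"])
  fix t :: real assume "t \<in> {0..T}"
  then have "\<bar>t\<bar> ^ j \<le> \<bar>T\<bar> ^ j" by (intro power_mono) auto
  then show "cmod (of_real (t ^ j) / (1 - \<i> * of_real (w * t))) \<le> \<bar>T\<bar> ^ j"
    using norm_transform_integrand_le[of t j "w * t"] by linarith
qed auto

lemma moment_transform_expansion:
  "moment_transform M T j w = of_real (sig_moment M T j) + \<i> * of_real w * moment_transform M T (Suc j) w"
proof -
  have pointwise: "of_real (t ^ j) / (1 - \<i> * of_real (w * t)) =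
      of_real (t ^ j) + \<i> * of_real w * (of_real (t ^ Suc j) / (1 - \<i> * of_real (w * t)))" for t
    using one_le_norm_one_minus_ii_mult[of "w * t"] by (auto simp: field_simps)
  have "moment_transform M T j w = (LINT t:{0..T}|M. of_real (t ^ j)
      + \<i> * of_real w * (of_real (t ^ Suc j) / (1 - \<i> * of_real (w * t))))"
    unfolding moment_transform_def by (simp only: pointwise[symmetric])
  also have "\<dots> = (LINT t:{0..T}|M. of_real (t ^ j))
      + \<i> * of_real w * (LINT t:{0..T}|M. of_real (t ^ Suc j) / (1 - \<i> * of_real (w * t)))"
    by (simp only: set_integral_mult_right
        set_integral_add(2)[OF set_integrable_power set_integrable_mult_right[OF set_integrable_transform_integrand]])
  finally show ?thesis
    by (simp only: moment_transform_def sig_moment_def set_integral_complex_of_real)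
qed

lemma norm_moment_transform_le: "cmod (moment_transform M T j w) \<le> \<bar>T\<bar> ^ j * measure M {0..T}"
proof -
  have "cmod (moment_transform M T j w)
      \<le> (LINT t:{0..T}|M. cmod (of_real (t ^ j) / (1 - \<i> * of_real (w * t))))"
    unfolding moment_transform_def by (rule set_integral_norm_bound[OF set_integrable_transform_integrand])
  also have "\<dots> \<le> (LINT t:{0..T}|M. \<bar>T\<bar> ^ j)"
  proof (rule set_integral_mono)
    show "set_integrable M {0..T} (\<lambda>t. \<bar>T\<bar> ^ j)"
      using set_integrable_mult_right[OF set_integrable_power[of 0], of "\<bar>T\<bar> ^ j"] by simp
    fix t assume "t \<in> {0..T}"
    then have "\<bar>t\<bar> ^ j \<le> \<bar>T\<bar> ^ j" by (intro power_mono) auto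
    then show "cmod (of_real (t ^ j) / (1 - \<i> * of_real (w * t))) \<le> \<bar>T\<bar> ^ j"
      using norm_transform_integrand_le[of t j "w * t"] by linarith
  qed (rule set_integrable_norm[OF set_integrable_transform_integrand])
  also have "\<dots> = \<bar>T\<bar> ^ j * measure M {0..T}"
    using emeasure_Icc_finite by (simp add: set_integral_const sets_eq_borel)
  finally show ?thesis .
qed

lemma moment_transform_at_0: "moment_transform M T j 0 = of_real (sig_moment M T j)"
  using moment_transform_expansion[of j 0] by simp

lemma Bfun_moment_transform: "Bfun (moment_transform M T j) F"
  by (rule BfunI, rule always_eventually, rule allI, rule norm_moment_transform_le)

end

lemma finite_measure_on_Icc_interval_measure:
  assumes "\<And>x y. x \<le> y \<Longrightarrow> G x \<le> G y" "\<And>x. continuous (at_right x) G"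
  shows "finite_measure_on_Icc (interval_measure G) T"
proof
  have "emeasure (interval_measure G) {0..T} \<le> emeasure (interval_measure G) {-1<..T}"
    by (intro emeasure_mono) auto
  also have "\<dots> < \<infinity>"
    using assms by (cases "-1 \<le> T") (simp_all add: emeasure_interval_measure_Ioc)
  finally show "emeasure (interval_measure G) {0..T} < \<infinity>" .
qed simp

lemma sig_moment_interval_measure_pos:
  assumes mono: "\<And>x y. x \<le> y \<Longrightarrow> G x \<le> G y" and rcont: "\<And>x. continuous (at_right x) G"
    and "0 \<le> T" "G 0 < G T"
  shows "0 < sig_moment (interval_measure G) T (Suc k)"
proof -
  let ?M = "interval_measure G"
  interpret finite_measure_on_Icc ?M T
    using mono rcont by (rule finite_measure_on_Icc_interval_measure)
  have nonneg: "0 \<le> sig_moment ?M T (Suc k)"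
    unfolding sig_moment_def set_lebesgue_integral_def
    by (intro Bochner_Integration.integral_nonneg) (simp split: split_indicator)
  have "emeasure ?M {0<..T} = ennreal (G T - G 0)"
    using assms by (intro emeasure_interval_measure_Ioc) auto
  then have "\<not> (AE t in ?M. t \<notin> {0<..T})"
    using assms by (subst AE_iff_measurable[of "{0<..T}"]) auto
  moreover have "AE t in ?M. t \<notin> {0<..T}" if "sig_moment ?M T (Suc k) = 0"
  proof -
    have "AE t in ?M. indicator {0..T} t *\<^sub>R t ^ Suc k = (0::real)"
      using that set_integrable_power[of "Suc k", where 'a=real]
      unfolding sig_moment_def set_lebesgue_integral_def set_integrable_def
      by (subst integral_nonneg_eq_0_iff_AE[symmetric]) (auto simp: indicator_def)
    then show ?thesis
      by (rule AE_mp) (auto intro!: AE_I2 simp: indicator_def)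
  qed
  ultimately show ?thesis
    using nonneg by fastforce
qed

lemma lam_moment_eq_sig_moment: "lam_moment G T j = sig_moment (interval_measure G) T (Suc j)"
  by (simp add: lam_moment_def sig_moment_def mult.commute)

lemma product_identity_of_representations:
  assumes "F \<noteq> 0" "\<rho>f \<noteq> 0" "\<nu> = \<eta> / \<rho>f" "w \<noteq> 0" "L \<noteq> 0"
    and K: "of_real (F / \<nu>) * k = L"
    and T: "\<i> * of_real (\<eta> * \<phi>) / of_real (w * \<rho>f) * inverse k = of_real a * \<i> / of_real w + S"
  shows "(of_real a - \<i> * of_real w * S) * L = of_real (\<phi> * F)"
proof -
  have "\<nu> \<noteq> 0" "k \<noteq> 0"
    using K \<open>L \<noteq> 0\<close> by auto
  have "\<eta> = \<nu> * \<rho>f"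
    using assms(2,3) by simp
  then have "\<i> * of_real \<nu> * of_real \<phi> = (\<i> * of_real a + S * of_real w) * k"
    using T \<open>k \<noteq> 0\<close> assms(2,4) by (simp add: field_simps)
  moreover have "k = L * of_real \<nu> / of_real F"
    using K \<open>\<nu> \<noteq> 0\<close> assms(1) by (auto simp: field_simps)
  ultimately have "of_real \<nu> * (\<i> * of_real (\<phi> * F)) = of_real \<nu> * (L * (\<i> * of_real a + S * of_real w))"
    using assms(1) by (simp add: field_simps)
  then have "\<i> * of_real (\<phi> * F) = L * (\<i> * of_real a + S * of_real w)"
    using \<open>\<nu> \<noteq> 0\<close> by simp
  then have "(of_real a - \<i> * of_real w * S) * L = - \<i> * (\<i> * of_real (\<phi> * F))"
    by (simp add: algebra_simps)
  then show ?thesis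
    by simp
qed

lemma lam_moment_recursion:
  fixes \<Theta>1 F \<nu> \<eta> \<rho>f \<phi> a :: real and G :: "real \<Rightarrow> real" and K :: "real \<Rightarrow> complex"
    and \<sigma> :: "real measure"
  assumes G_mono: "\<And>x y. x \<le> y \<Longrightarrow> G x \<le> G y"
    and G_rcont: "\<And>x. continuous (at_right x) G"
    and lam_moment_nonzero: "lam_moment G \<Theta>1 0 \<noteq> 0"
    and nonzero: "F \<noteq> 0" "\<rho>f \<noteq> 0" and nu_def: "\<nu> = \<eta> / \<rho>f"
    and K_repr: "\<And>\<omega>. complex_of_real (F / \<nu>) * K \<omega> =
        (LINT \<Theta>:{0..\<Theta>1}|interval_measure G.
           complex_of_real \<Theta> / (1 - \<i> * complex_of_real (\<omega> * \<Theta>)))"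
    and sigma_sets: "sets \<sigma> = sets borel"
    and sigma_finite: "finite_measure \<sigma>"
    and T_repr: "\<And>\<omega>. \<omega> \<noteq> 0 \<Longrightarrow>
        \<i> * complex_of_real (\<eta> * \<phi>) / complex_of_real (\<omega> * \<rho>f) * inverse (K \<omega>) =
        complex_of_real a * \<i> / complex_of_real \<omega> +
        (LINT t:{0..\<Theta>1}|\<sigma>. 1 / (1 - \<i> * complex_of_real (\<omega> * t)))"
  shows "a * lam_moment G \<Theta>1 0 = \<phi> * F"
    and "a * lam_moment G \<Theta>1 (Suc m) = (\<Sum>k\<le>m. sig_moment \<sigma> \<Theta>1 k * lam_moment G \<Theta>1 (m - k))"
proof -
  interpret M: finite_measure_on_Icc "interval_measure G" \<Theta>1
    using G_mono G_rcont by (rule finite_measure_on_Icc_interval_measure)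
  interpret \<sigma>: finite_measure_on_Icc \<sigma> \<Theta>1
  proof
    show "emeasure \<sigma> {0..\<Theta>1} < \<infinity>"
      using finite_measure.emeasure_finite[OF sigma_finite] by (simp add: less_top)
  qed (rule sigma_sets)
  let ?L = "\<lambda>j. moment_transform (interval_measure G) \<Theta>1 (Suc j)"
  let ?S = "moment_transform \<sigma> \<Theta>1"
  have L_expansion: "?L j w = of_real (lam_moment G \<Theta>1 j) + \<i> * of_real w * ?L (Suc j) w" for j w
    unfolding lam_moment_eq_sig_moment by (rule M.moment_transform_expansion)
  have "(?L 0 \<longlongrightarrow> of_real (lam_moment G \<Theta>1 0)) (at 0)"
    by (rule tendsto_of_expansion[OF always_eventually[OF allI[OF L_expansion]] M.Bfun_moment_transform])
  then have "\<forall>\<^sub>F w in at 0. ?L 0 w \<noteq> 0"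
    using lam_moment_nonzero by (intro tendsto_imp_eventually_ne) auto
  then have "\<forall>\<^sub>F w in at 0. (of_real a - \<i> * of_real w * ?S 0 w) * ?L 0 w = of_real (\<phi> * F)"
    using eventually_neq_at_within[of 0 0 UNIV]
  proof eventually_elim
    case (elim w)
    have "of_real (F / \<nu>) * K w = ?L 0 w"
      using K_repr[of w] by (simp add: moment_transform_def)
    moreover have "\<i> * of_real (\<eta> * \<phi>) / of_real (w * \<rho>f) * inverse (K w) = of_real a * \<i> / of_real w + ?S 0 w"
      using T_repr[of w] elim by (simp add: moment_transform_def)
    ultimately show ?case
      using elim by (intro product_identity_of_representations[OF nonzero nu_def]) auto
  qed
  from product_expansion_coefficients[OF L_expansion \<sigma>.moment_transform_expansion
      M.Bfun_moment_transform \<sigma>.Bfun_moment_transform this]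
  show "a * lam_moment G \<Theta>1 0 = \<phi> * F"
    and "a * lam_moment G \<Theta>1 (Suc m) = (\<Sum>k\<le>m. sig_moment \<sigma> \<Theta>1 k * lam_moment G \<Theta>1 (m - k))"
    by (simp_all flip: of_real_mult of_real_sum)
qed

theorem mainTheorem4:
  fixes \<Theta>1 F \<nu> \<eta> \<rho>f \<phi> a :: real
    and G :: "real \<Rightarrow> real"
    and K :: "real \<Rightarrow> complex"
    and \<sigma> :: "real measure"
  assumes Theta1_pos: "\<Theta>1 > 0"
    and G_mono: "\<And>x y. x \<le> y \<Longrightarrow> G x \<le> G y"
    and G_rcont: "\<And>x. continuous (at_right x) G"
    and G_zero: "\<And>x. x \<le> 0 \<Longrightarrow> G x = 0"
    and G_one: "\<And>x. x \<ge> \<Theta>1 \<Longrightarrow> G x = 1"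
    and pos: "F > 0" "\<nu> > 0" "\<eta> > 0" "\<rho>f > 0" "\<phi> > 0"
    and nu_def: "\<nu> = \<eta> / \<rho>f"
    and K_repr: "\<And>\<omega>. complex_of_real (F / \<nu>) * K \<omega> =
        (LINT \<Theta>:{0..\<Theta>1}|interval_measure G.
           complex_of_real \<Theta> / (1 - \<i> * complex_of_real (\<omega> * \<Theta>)))"
    and a_nonneg: "a \<ge> 0"
    and sigma_sets: "sets \<sigma> = sets borel"
    and sigma_finite: "finite_measure \<sigma>"
    and sigma_supp: "emeasure \<sigma> (- {0..\<Theta>1}) = 0"
    and T_repr: "\<And>\<omega>. \<omega> \<noteq> 0 \<Longrightarrow>
        \<i> * complex_of_real (\<eta> * \<phi>) / complex_of_real (\<omega> * \<rho>f) * inverse (K \<omega>) =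
        complex_of_real a * \<i> / complex_of_real \<omega> +
        (LINT t:{0..\<Theta>1}|\<sigma>. 1 / (1 - \<i> * complex_of_real (\<omega> * t)))"
  shows "complex_of_real (lam_moment G \<Theta>1 0) = complex_of_real F * K 0 / complex_of_real \<nu>
         \<and> complex_of_real (lam_moment G \<Theta>1 0)
             = complex_of_real (\<phi> * F) * K 0 / complex_of_real (\<phi> * \<nu>)
         \<and> (\<forall>p\<ge>1. lam_moment G \<Theta>1 p =
              lam_moment G \<Theta>1 0 / (\<phi> * F) *
              (\<Sum>k\<le>p - 1. sig_moment \<sigma> \<Theta>1 k * lam_moment G \<Theta>1 (p - 1 - k)))
         \<and> sig_moment \<sigma> \<Theta>1 0 = (\<phi> * F) * lam_moment G \<Theta>1 1 / (lam_moment G \<Theta>1 0)\<^sup>2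
         \<and> complex_of_real (sig_moment \<sigma> \<Theta>1 0)
             = complex_of_real (\<nu>\<^sup>2 * \<phi>) / (K 0 ^ 2 * complex_of_real F)
               * complex_of_real (lam_moment G \<Theta>1 1)
         \<and> \<phi> * F = sig_moment \<sigma> \<Theta>1 0 * (lam_moment G \<Theta>1 0)\<^sup>2 / lam_moment G \<Theta>1 1"
proof -
  let ?\<mu> = "lam_moment G \<Theta>1" and ?s = "sig_moment \<sigma> \<Theta>1"
  have lam_pos: "0 < ?\<mu> j" for j
    unfolding lam_moment_eq_sig_moment using G_zero[of 0] G_one[of \<Theta>1] Theta1_pos
    by (intro sig_moment_interval_measure_pos G_mono G_rcont) auto
  note moments = lam_moment_recursion[OF G_mono G_rcont _ _ _ nu_def K_repr sigma_sets sigma_finite T_repr]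
  have a_eq: "a = \<phi> * F / ?\<mu> 0"
    using moments(1) lam_pos[of 0] pos by (simp add: field_simps)
  have recursion: "?\<mu> (Suc m) = ?\<mu> 0 / (\<phi> * F) * (\<Sum>k\<le>m. ?s k * ?\<mu> (m - k))" for m
    using moments(2)[of m] lam_pos[of 0] pos by (simp add: a_eq field_simps)
  have K0: "K 0 = of_real (\<nu> * ?\<mu> 0 / F)"
    using K_repr[of 0] pos
      finite_measure_on_Icc.moment_transform_at_0[OF finite_measure_on_Icc_interval_measure[OF G_mono G_rcont], of \<Theta>1 1]
    by (simp add: moment_transform_def lam_moment_eq_sig_moment field_simps)
  have s0: "?s 0 = \<phi> * F * ?\<mu> 1 / (?\<mu> 0)\<^sup>2"
    using recursion[of 0] lam_pos[of 0] pos by (simp add: field_simps power2_eq_square)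
  have "\<forall>p\<ge>1. ?\<mu> p = ?\<mu> 0 / (\<phi> * F) * (\<Sum>k\<le>p - 1. ?s k * ?\<mu> (p - 1 - k))"
    using recursion by (metis Suc_diff_1 less_eq_Suc_le One_nat_def)
  moreover have "complex_of_real (?s 0) = of_real (\<nu>\<^sup>2 * \<phi>) / (K 0 ^ 2 * of_real F) * of_real (?\<mu> 1)"
    unfolding K0 s0 using lam_pos[of 0] pos
    by (simp flip: of_real_mult of_real_divide of_real_power) (simp add: field_simps power2_eq_square)
  ultimately show ?thesis
    unfolding K0 s0 using lam_pos[of 0] lam_pos[of 1] pos by (simp add: field_simps power2_eq_square)
qed

end
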